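(* Let $(X,\mathcal{M})$ be a measurable space and $K_x(dx')$ a probability kernel from $X$ to $X$. Define $S_K[f](x)=\int f(x')K_x(dx')$ for $f\in\mathcal{M}_b(X)$, $S^K[P]=\int K_x(\cdot)P(dx)$ for $P\in\mathcal{P}(X)$, and $\mathcal{P}_K(X)=\{P\in\mathcal{P}(X):S^K[P]=P\}$. Let $Q,P\in\mathcal{P}_K(X)$. (i) If $\Gamma\subset\mathcal{M}_b(X)$ with $S_K[\Gamma]\subset\Gamma$, then $D_f^\Gamma(Q\|P)=D_f^{S_K[\Gamma]}(Q\|P)$ and $W^\Gamma(Q,P)=W^{S_K[\Gamma]}(Q,P)$. (ii) If $\Gamma\subset\mathcal{M}_b(X)^2$ with $S_K[\Gamma]\subset\Gamma$ (componentwise) and the cost satisfies $S_K[c(\cdot,y)]=c(\cdot,y)$ and $S_K[c(x,\cdot)]=c(x,\cdot)$ for all $x,y\in X$, then $\mathcal{SD}^\Gamma_{c,\epsilon}(Q,P)=\mathcal{SD}^{S_K[\Gamma]}_{c,\epsilon}(Q,P)$. (iii) If moreover $S_K\circ S_K=S_K$ and $S_K[\Gamma]\subset\Gamma$, then $S_K[\Gamma]=\Gamma^{\mathrm{inv}}_K:=\{\gamma\in\Gamma:S_K[\gamma]=\gamma\}$.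
   Context: $f:[0,\infty)\to\mathbb{R}$ convex, lower semicontinuous, $f(1)=0$, strictly convex at $1$; $f^*$ its Legendre transform. $D_f^\Gamma(Q\|P)=\sup_{\gamma\in\Gamma}\{E_Q[\gamma]-\inf_{\nu\in\mathbb{R}}(\nu+E_P[f^*(\gamma-\nu)])\}$; $W^\Gamma(Q,P)=\sup_{\gamma\in\Gamma}\{E_Q[\gamma]-E_P[\gamma]\}$. For measurable cost $c:X\times X\to[0,\infty)$, $\epsilon>0$, $\Gamma$ a set of pairs: $W^\Gamma_{c,\epsilon}(Q,P)=\sup_{(\gamma_1,\gamma_2)\in\Gamma}\{E_P[\gamma_1]+E_Q[\gamma_2]-\epsilon E_{P\times Q}[\exp((\gamma_1(x)+\gamma_2(y)-c(x,y))/\epsilon)]+\epsilon\}$ and $\mathcal{SD}^\Gamma_{c,\epsilon}(Q,P)=W^\Gamma_{c,\epsilon}(Q,P)-\frac12W^\Gamma_{c,\epsilon}(Q,Q)-\frac12W^\Gamma_{c,\epsilon}(P,P)$. *)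

theory Defs
  imports "HOL-Probability.Probability"
begin

definition Mb :: "'a measure \<Rightarrow> ('a \<Rightarrow> real) set" where
  "Mb M = {g. g \<in> borel_measurable M \<and> (\<exists>B. \<forall>x\<in>space M. \<bar>g x\<bar> \<le> B)}"

definition probs :: "'a measure \<Rightarrow> 'a measure set" where
  "probs M = {P. prob_space P \<and> sets P = sets M}"

definition SK :: "('a \<Rightarrow> 'a measure) \<Rightarrow> ('a \<Rightarrow> real) \<Rightarrow> ('a \<Rightarrow> real)" where
  "SK K g = (\<lambda>x. \<integral>x'. g x' \<partial>(K x))"

definition SupK :: "('a \<Rightarrow> 'a measure) \<Rightarrow> 'a measure \<Rightarrow> 'a measure" where
  "SupK K P = bind P K"

definition invariant_probs :: "'a measure \<Rightarrow> ('a \<Rightarrow> 'a measure) \<Rightarrow> 'a measure set" where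
  "invariant_probs M K = {P \<in> probs M. SupK K P = P}"

definition prob_kernel :: "'a measure \<Rightarrow> ('a \<Rightarrow> 'a measure) \<Rightarrow> bool" where
  "prob_kernel M K \<longleftrightarrow> K \<in> M \<rightarrow>\<^sub>M prob_algebra M"

definition SK2 :: "('a \<Rightarrow> 'a measure) \<Rightarrow> ('a \<Rightarrow> real) \<times> ('a \<Rightarrow> real) \<Rightarrow> ('a \<Rightarrow> real) \<times> ('a \<Rightarrow> real)" where
  "SK2 K p = (SK K (fst p), SK K (snd p))"

definition lsc_nonneg :: "(real \<Rightarrow> real) \<Rightarrow> bool" where
  "lsc_nonneg f \<longleftrightarrow> (\<forall>x\<ge>0. \<forall>c<f x. eventually (\<lambda>y. c < f y) (at x within {0..}))"

definition strictly_convex_at :: "(real \<Rightarrow> real) \<Rightarrow> real \<Rightarrow> bool" where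
  "strictly_convex_at f z \<longleftrightarrow>
     (\<forall>x\<ge>0. \<forall>y\<ge>0. \<forall>t. 0 < t \<and> t < 1 \<and> x \<noteq> y \<and> t * x + (1 - t) * y = z
        \<longrightarrow> f z < t * f x + (1 - t) * f y)"

definition admissible_f :: "(real \<Rightarrow> real) \<Rightarrow> bool" where
  "admissible_f f \<longleftrightarrow> convex_on {0..} f \<and> lsc_nonneg f \<and> f 1 = 0 \<and> strictly_convex_at f 1"

definition fstar :: "(real \<Rightarrow> real) \<Rightarrow> real \<Rightarrow> ereal" where
  "fstar f y = (SUP x\<in>{0..}. ereal (x * y - f x))"

definition eintegral :: "'a measure \<Rightarrow> ('a \<Rightarrow> ereal) \<Rightarrow> ereal" where
  "eintegral M g = enn2ereal (\<integral>\<^sup>+ x. e2ennreal (g x) \<partial>M) - enn2ereal (\<integral>\<^sup>+ x. e2ennreal (- g x) \<partial>M)"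

definition Df :: "(real \<Rightarrow> real) \<Rightarrow> ('a \<Rightarrow> real) set \<Rightarrow> 'a measure \<Rightarrow> 'a measure \<Rightarrow> ereal" where
  "Df f \<Gamma> Q P = (SUP \<gamma>\<in>\<Gamma>. ereal (\<integral>x. \<gamma> x \<partial>Q)
      - (INF \<nu>::real. ereal \<nu> + eintegral P (\<lambda>x. fstar f (\<gamma> x - \<nu>))))"

definition WG :: "('a \<Rightarrow> real) set \<Rightarrow> 'a measure \<Rightarrow> 'a measure \<Rightarrow> ereal" where
  "WG \<Gamma> Q P = (SUP \<gamma>\<in>\<Gamma>. ereal ((\<integral>x. \<gamma> x \<partial>Q) - (\<integral>x. \<gamma> x \<partial>P)))"

definition Wce :: "('a \<Rightarrow> 'a \<Rightarrow> real) \<Rightarrow> real \<Rightarrow> (('a \<Rightarrow> real) \<times> ('a \<Rightarrow> real)) set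
    \<Rightarrow> 'a measure \<Rightarrow> 'a measure \<Rightarrow> ereal" where
  "Wce c \<epsilon> \<Gamma> Q P = (SUP g\<in>\<Gamma>. ereal ((\<integral>x. fst g x \<partial>P) + (\<integral>y. snd g y \<partial>Q)
      - \<epsilon> * (\<integral>z. exp ((fst g (fst z) + snd g (snd z) - c (fst z) (snd z)) / \<epsilon>) \<partial>(P \<Otimes>\<^sub>M Q)) + \<epsilon>))"

definition SD :: "('a \<Rightarrow> 'a \<Rightarrow> real) \<Rightarrow> real \<Rightarrow> (('a \<Rightarrow> real) \<times> ('a \<Rightarrow> real)) set
    \<Rightarrow> 'a measure \<Rightarrow> 'a measure \<Rightarrow> ereal" where
  "SD c \<epsilon> \<Gamma> Q P = Wce c \<epsilon> \<Gamma> Q P - ereal (1/2) * Wce c \<epsilon> \<Gamma> Q Q - ereal (1/2) * Wce c \<epsilon> \<Gamma> P P"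

end

theory Submission
  imports Defs
begin

text \<open>Invariance of \<open>P\<close> under \<open>K\<close> means \<open>E\<^sub>P[S\<^sub>K g] = E\<^sub>P[g]\<close>, so passing from a test
  function \<open>\<gamma>\<close> to \<open>S\<^sub>K \<gamma>\<close> leaves all linear terms of the objectives unchanged. The remaining
  terms are expectations of convex functions of \<open>\<gamma>\<close>, namely \<open>f\<^sup>*(\<gamma> - \<nu>)\<close> and the Gibbs factor
  \<open>exp((\<gamma>\<^sub>1(x) + \<gamma>\<^sub>2(y) - c(x,y))/\<epsilon>)\<close>; by Jensen's inequality for the probability measures
  \<open>K\<^sub>x\<close> followed by invariance they can only decrease. Hence every objective is at least as large at
  \<open>S\<^sub>K \<gamma>\<close> as at \<open>\<gamma>\<close>, and since \<open>S\<^sub>K[\<Gamma>] \<subseteq> \<Gamma>\<close> the suprema over \<open>\<Gamma>\<close> and \<open>S\<^sub>K[\<Gamma>]\<close> agree.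
  For the Gibbs factor, Jensen is applied in one variable at a time (Fubini), which is where the
  \<open>S\<^sub>K\<close>-harmonicity of the sections of \<open>c\<close> enters.\<close>

lemma prob_kernelD:
  assumes "prob_kernel M K" and "x \<in> space M"
  shows "prob_space (K x)" and "sets (K x) = sets M" and "space (K x) = space M"
proof -
  have "K x \<in> space (prob_algebra M)"
    using assms unfolding prob_kernel_def by (auto dest: measurable_space)
  then show "prob_space (K x)" and sets: "sets (K x) = sets M"
    by (auto simp: space_prob_algebra)
  from sets show "space (K x) = space M" by (rule sets_eq_imp_space_eq)
qed

lemma prob_kernel_measurable_subprob_algebra:
  "prob_kernel M K \<Longrightarrow> K \<in> M \<rightarrow>\<^sub>M subprob_algebra M"
  unfolding prob_kernel_def by (rule measurable_prob_algebraD)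

lemma invariant_probsD:
  assumes "P \<in> invariant_probs M K"
  shows "prob_space P" and "sets P = sets M" and "space P = space M" and "P \<bind> K = P"
  using assms by (auto simp: invariant_probs_def probs_def SupK_def dest: sets_eq_imp_space_eq)

lemma MbE:
  assumes "g \<in> Mb M"
  obtains B where "g \<in> borel_measurable M" and "\<And>x. x \<in> space M \<Longrightarrow> \<bar>g x\<bar> \<le> B"
  using assms unfolding Mb_def by auto

lemma MbI:
  "g \<in> borel_measurable M \<Longrightarrow> (\<And>x. x \<in> space M \<Longrightarrow> \<bar>g x\<bar> \<le> B) \<Longrightarrow> g \<in> Mb M"
  unfolding Mb_def by auto

lemma Mb_integrable:
  assumes "g \<in> Mb M" and "prob_space N" and N: "sets N = sets M"
  shows "integrable N g"
proof -
  interpret prob_space N by fact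
  obtain B where "g \<in> borel_measurable M" and "\<And>x. x \<in> space M \<Longrightarrow> \<bar>g x\<bar> \<le> B"
    using MbE[OF assms(1)] by blast
  then show ?thesis
    using sets_eq_imp_space_eq[OF N]
    by (intro integrable_const_bound[where B=B] AE_I2) (auto simp: measurable_cong_sets[OF N refl])
qed

lemma SK_measurable:
  assumes "prob_kernel M K" and "g \<in> borel_measurable M"
  shows "SK K g \<in> borel_measurable M"
  unfolding SK_def
  by (rule measurable_compose[OF prob_kernel_measurable_subprob_algebra[OF assms(1)]
        integral_measurable_subprob_algebra[OF assms(2)]])

lemma SK_le_const:
  assumes K: "prob_kernel M K" and x: "x \<in> space M"
    and "integrable (K x) g" and "\<And>y. y \<in> space M \<Longrightarrow> g y \<le> B"
  shows "SK K g x \<le> B"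
proof -
  interpret prob_space "K x" using prob_kernelD[OF K x] by simp
  show ?thesis
    unfolding SK_def using assms prob_kernelD(3)[OF K x] by (intro integral_le_const AE_I2) auto
qed

lemma abs_SK_le:
  assumes K: "prob_kernel M K" and x: "x \<in> space M"
    and g: "g \<in> Mb M" and B: "\<And>y. y \<in> space M \<Longrightarrow> \<bar>g y\<bar> \<le> B"
  shows "\<bar>SK K g x\<bar> \<le> B"
proof -
  have "integrable (K x) g" "integrable (K x) (\<lambda>y. - g y)"
    using Mb_integrable[OF g prob_kernelD(1,2)[OF K x]] by auto
  then have "SK K g x \<le> B" "SK K (\<lambda>y. - g y) x \<le> B"
    using B by (auto intro!: SK_le_const[OF K x] simp: abs_le_iff)
  then show ?thesis by (simp add: SK_def abs_le_iff)
qed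

lemma SK_Mb:
  assumes K: "prob_kernel M K" and g: "g \<in> Mb M"
  shows "SK K g \<in> Mb M"
proof -
  obtain B where gm: "g \<in> borel_measurable M" and B: "\<And>x. x \<in> space M \<Longrightarrow> \<bar>g x\<bar> \<le> B"
    using MbE[OF g] by blast
  show ?thesis by (rule MbI[OF SK_measurable[OF K gm] abs_SK_le[OF K _ g B]])
qed

lemma integral_SK_invariant:
  assumes K: "prob_kernel M K" and P: "P \<in> invariant_probs M K" and g: "g \<in> Mb M"
  shows "(\<integral>x. SK K g x \<partial>P) = (\<integral>x. g x \<partial>P)"
proof -
  interpret prob_space P using invariant_probsD[OF P] by simp
  obtain B where gm: "g \<in> borel_measurable M" and B: "\<And>x. x \<in> space M \<Longrightarrow> \<bar>g x\<bar> \<le> B"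
    using MbE[OF g] by blast
  have "(\<integral>x. g x \<partial>P) = (\<integral>x. g x \<partial>(P \<bind> K))"
    using invariant_probsD(4)[OF P] by simp
  also have "\<dots> = (\<integral>x. SK K g x \<partial>P)"
    unfolding SK_def
  proof (rule integral_bind[where K=M and B=B and B'=1])
    show "K \<in> P \<rightarrow>\<^sub>M subprob_algebra M"
      using prob_kernel_measurable_subprob_algebra[OF K]
      by (simp add: measurable_cong_sets[OF invariant_probsD(2)[OF P] refl])
    show "AE x in P. emeasure (K x) (space (K x)) \<le> ennreal 1"
      using prob_space.emeasure_space_1[OF prob_kernelD(1)[OF K]] invariant_probsD(3)[OF P]
      by (intro AE_I2) simp
  qed (use gm B in \<open>auto intro: finite_measure_axioms\<close>)
  finally show ?thesis ..
qed

lemma nn_integral_kernel_invariant: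
  assumes K: "prob_kernel M K" and P: "P \<in> invariant_probs M K" and h: "h \<in> borel_measurable M"
  shows "(\<integral>\<^sup>+x. (\<integral>\<^sup>+y. h y \<partial>K x) \<partial>P) = (\<integral>\<^sup>+x. h x \<partial>P)"
proof -
  have "K \<in> P \<rightarrow>\<^sub>M subprob_algebra M"
    using prob_kernel_measurable_subprob_algebra[OF K]
    by (simp add: measurable_cong_sets[OF invariant_probsD(2)[OF P] refl])
  then have "(\<integral>\<^sup>+x. h x \<partial>(P \<bind> K)) = (\<integral>\<^sup>+x. (\<integral>\<^sup>+y. h y \<partial>K x) \<partial>P)"
    by (rule nn_integral_bind[OF h])
  then show ?thesis using invariant_probsD(4)[OF P] by simp
qed

lemma SUP_eq_SUP_image_if_le:
  fixes T :: "'b \<Rightarrow> 'c::complete_lattice"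
  assumes "F ` G \<subseteq> G" and "\<And>g. g \<in> G \<Longrightarrow> T g \<le> T (F g)"
  shows "(SUP g\<in>G. T g) = (SUP g\<in>F ` G. T g)"
proof (rule antisym)
  show "(SUP g\<in>G. T g) \<le> (SUP g\<in>F ` G. T g)"
    using assms(2) by (intro SUP_mono) blast
  show "(SUP g\<in>F ` G. T g) \<le> (SUP g\<in>G. T g)"
    using assms(1) by (rule SUP_subset_mono) simp
qed

lemma image_eq_fixpoints_if_idem:
  assumes "F ` G \<subseteq> G" and "\<And>g. g \<in> G \<Longrightarrow> F (F g) = F g"
  shows "F ` G = {g \<in> G. F g = g}"
  using assms by force

lemma WG_SK_eq:
  assumes K: "prob_kernel M K" and Q: "Q \<in> invariant_probs M K" and P: "P \<in> invariant_probs M K"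
    and G: "G \<subseteq> Mb M" and sub: "SK K ` G \<subseteq> G"
  shows "WG G Q P = WG (SK K ` G) Q P"
  unfolding WG_def
  using G by (intro SUP_eq_SUP_image_if_le[OF sub])
    (auto simp: integral_SK_invariant[OF K Q] integral_SK_invariant[OF K P])

lemma fstar_ge: "f 1 = 0 \<Longrightarrow> ereal y \<le> fstar f y"
  unfolding fstar_def by (rule SUP_upper2[where i=1]) auto

text \<open>As a supremum of affine functions, \<open>fstar f\<close> is lower semicontinuous.\<close>

lemma open_fstar_superlevel: "open {y. t < fstar f y}"
proof -
  have "{y. t < fstar f y} = (\<Union>x\<in>{0..}. {y. t < ereal (x * y - f x)})"
    unfolding fstar_def less_SUP_iff by blast
  also have "open \<dots>"
    by (intro open_UN ballI open_Collect_less continuous_intros)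
  finally show ?thesis .
qed

lemma fstar_borel [measurable]: "fstar f \<in> borel_measurable borel"
  by (rule borel_measurableI_greater) (simp add: open_fstar_superlevel)

lemma e2ennreal_add_shift:
  fixes a :: ereal
  assumes "0 \<le> C" and "- ereal C \<le> a"
  shows "e2ennreal (a + ereal C) + e2ennreal (- a) = e2ennreal a + ennreal C"
proof (cases a)
  case (real r)
  then show ?thesis
    using assms by (cases "0 \<le> r") (auto simp: ennreal_neg add.commute simp flip: ennreal_plus)
qed (use assms in auto)

lemma eintegral_eq_shift:
  fixes g :: "'a \<Rightarrow> ereal"
  assumes "prob_space N" and g: "g \<in> borel_measurable N" and C: "0 \<le> C"
    and lb: "\<And>x. x \<in> space N \<Longrightarrow> - ereal C \<le> g x"
  shows "eintegral N g = enn2ereal (\<integral>\<^sup>+x. e2ennreal (g x + ereal C) \<partial>N) - ereal C"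
proof -
  interpret prob_space N by fact
  define X where "X = (\<integral>\<^sup>+x. e2ennreal (g x) \<partial>N)"
  define Y where "Y = (\<integral>\<^sup>+x. e2ennreal (- g x) \<partial>N)"
  define Z where "Z = (\<integral>\<^sup>+x. e2ennreal (g x + ereal C) \<partial>N)"
  have "Z + Y = (\<integral>\<^sup>+x. e2ennreal (g x + ereal C) + e2ennreal (- g x) \<partial>N)"
    unfolding Y_def Z_def using g by (intro nn_integral_add[symmetric]) auto
  also have "\<dots> = (\<integral>\<^sup>+x. e2ennreal (g x) + ennreal C \<partial>N)"
    using lb C by (intro nn_integral_cong e2ennreal_add_shift) auto
  also have "\<dots> = X + ennreal C"
    unfolding X_def using g by (subst nn_integral_add) (auto simp: emeasure_space_1)
  finally have sum: "enn2ereal Z + enn2ereal Y = enn2ereal X + ereal C"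
    using C by (metis enn2ereal_ennreal plus_ennreal.rep_eq)
  have "e2ennreal (- g x) \<le> ennreal C" if "x \<in> space N" for x
    using e2ennreal_mono[of "- g x" "ereal C"] lb[OF that] by (simp add: ereal_uminus_le_reorder)
  then have "Y \<le> ennreal C"
    unfolding Y_def using nn_integral_mono[of N _ "\<lambda>_. ennreal C"] by (simp add: emeasure_space_1)
  then obtain y where "enn2ereal Y = ereal y"
    by (cases Y rule: ennreal_cases) (auto simp: top_unique)
  with sum show ?thesis
    unfolding eintegral_def X_def[symmetric] Y_def[symmetric] Z_def[symmetric]
    by (cases "enn2ereal X"; cases "enn2ereal Z") auto
qed

lemma integral_le_nn_integral_ennreal:
  fixes u :: "'a \<Rightarrow> real"
  assumes u: "integrable N u"
  shows "ereal (\<integral>x. u x \<partial>N) \<le> enn2ereal (\<integral>\<^sup>+x. ennreal (u x) \<partial>N)"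
proof -
  have "(\<integral>\<^sup>+x. ennreal (u x) \<partial>N) = (\<integral>\<^sup>+x. ennreal (max 0 (u x)) \<partial>N)"
    by (intro nn_integral_cong) (auto simp: max_def ennreal_neg)
  also have "\<dots> = ennreal (\<integral>x. max 0 (u x) \<partial>N)"
    using u by (intro nn_integral_eq_integral) auto
  finally have "enn2ereal (\<integral>\<^sup>+x. ennreal (u x) \<partial>N) = ereal (\<integral>x. max 0 (u x) \<partial>N)"
    by (simp add: integral_nonneg_AE)
  moreover have "(\<integral>x. u x \<partial>N) \<le> (\<integral>x. max 0 (u x) \<partial>N)"
    using u by (intro integral_mono) auto
  ultimately show ?thesis by simp
qed

text \<open>Jensen's inequality for \<open>fstar f\<close>, via its affine minorants \<open>y \<mapsto> t * y - f t\<close>. The shift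
  by \<open>C\<close> makes the integrand nonnegative, which avoids extended-real integrals.\<close>

lemma fstar_integral_le:
  assumes "prob_space N" and h: "integrable N h" and C: "0 \<le> C"
  shows "e2ennreal (fstar f (\<integral>x. h x \<partial>N) + ereal C)
     \<le> (\<integral>\<^sup>+y. e2ennreal (fstar f (h y) + ereal C) \<partial>N)" (is "_ \<le> ?R")
proof -
  interpret prob_space N by fact
  have "fstar f (\<integral>x. h x \<partial>N) \<le> enn2ereal ?R - ereal C"
    unfolding fstar_def[of f "\<integral>x. h x \<partial>N"]
  proof (rule SUP_least)
    fix t :: real assume t: "t \<in> {0..}"
    have "ereal (t * (\<integral>x. h x \<partial>N) - f t) + ereal C = ereal (\<integral>y. t * h y - f t + C \<partial>N)"
      using h by (simp add: prob_space)
    also have "\<dots> \<le> enn2ereal (\<integral>\<^sup>+y. ennreal (t * h y - f t + C) \<partial>N)"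
      using h by (intro integral_le_nn_integral_ennreal) auto
    also have "\<dots> \<le> enn2ereal ?R"
    proof (subst less_eq_ennreal.rep_eq[symmetric], intro nn_integral_mono)
      fix y
      have "ereal (t * h y - f t) \<le> fstar f (h y)"
        unfolding fstar_def using t by (intro SUP_upper) auto
      then have "e2ennreal (ereal (t * h y - f t) + ereal C) \<le> e2ennreal (fstar f (h y) + ereal C)"
        by (intro e2ennreal_mono add_right_mono)
      then show "ennreal (t * h y - f t + C) \<le> e2ennreal (fstar f (h y) + ereal C)"
        by simp
    qed
    finally show "ereal (t * (\<integral>x. h x \<partial>N) - f t) \<le> enn2ereal ?R - ereal C"
      by (simp add: ereal_le_minus)
  qed
  then have "fstar f (\<integral>x. h x \<partial>N) + ereal C \<le> enn2ereal ?R"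
    by (simp add: ereal_le_minus)
  then show ?thesis
    using e2ennreal_mono by fastforce
qed

lemma nn_integral_fstar_SK_le:
  assumes K: "prob_kernel M K" and P: "P \<in> invariant_probs M K" and g: "g \<in> Mb M" and C: "0 \<le> C"
  shows "(\<integral>\<^sup>+x. e2ennreal (fstar f (SK K g x - \<nu>) + ereal C) \<partial>P)
     \<le> (\<integral>\<^sup>+x. e2ennreal (fstar f (g x - \<nu>) + ereal C) \<partial>P)"
proof -
  have [measurable]: "g \<in> borel_measurable M"
    using MbE[OF g] by blast
  have "(\<integral>\<^sup>+x. e2ennreal (fstar f (SK K g x - \<nu>) + ereal C) \<partial>P)
      \<le> (\<integral>\<^sup>+x. (\<integral>\<^sup>+y. e2ennreal (fstar f (g y - \<nu>) + ereal C) \<partial>K x) \<partial>P)"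
  proof (rule nn_integral_mono)
    fix x assume "x \<in> space P"
    then have x: "x \<in> space M"
      using invariant_probsD(3)[OF P] by simp
    interpret prob_space "K x"
      using prob_kernelD(1)[OF K x] .
    have "integrable (K x) g"
      using Mb_integrable[OF g prob_kernelD(1,2)[OF K x]] .
    moreover from this have "SK K g x - \<nu> = (\<integral>y. g y - \<nu> \<partial>K x)"
      by (simp add: SK_def prob_space)
    ultimately show "e2ennreal (fstar f (SK K g x - \<nu>) + ereal C)
        \<le> (\<integral>\<^sup>+y. e2ennreal (fstar f (g y - \<nu>) + ereal C) \<partial>K x)"
      using fstar_integral_le[OF prob_space_axioms _ C, of "\<lambda>y. g y - \<nu>" f] by simp
  qed
  also have "\<dots> = (\<integral>\<^sup>+x. e2ennreal (fstar f (g x - \<nu>) + ereal C) \<partial>P)"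
    by (rule nn_integral_kernel_invariant[OF K P]) measurable
  finally show ?thesis .
qed

lemma eintegral_fstar_SK_le:
  assumes K: "prob_kernel M K" and P: "P \<in> invariant_probs M K" and f1: "f 1 = 0" and g: "g \<in> Mb M"
  shows "eintegral P (\<lambda>x. fstar f (SK K g x - \<nu>)) \<le> eintegral P (\<lambda>x. fstar f (g x - \<nu>))"
proof -
  obtain B where gm: "g \<in> borel_measurable M" and B: "\<And>x. x \<in> space M \<Longrightarrow> \<bar>g x\<bar> \<le> B"
    using MbE[OF g] by blast
  define C where "C = \<bar>B\<bar> + \<bar>\<nu>\<bar>"
  have C: "0 \<le> C"
    unfolding C_def by simp
  have shift: "eintegral P (\<lambda>x. fstar f (u x - \<nu>))
      = enn2ereal (\<integral>\<^sup>+x. e2ennreal (fstar f (u x - \<nu>) + ereal C) \<partial>P) - ereal C"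
    if um: "u \<in> borel_measurable M" and uB: "\<And>x. x \<in> space M \<Longrightarrow> \<bar>u x\<bar> \<le> B" for u
  proof (rule eintegral_eq_shift[OF invariant_probsD(1)[OF P] _ C])
    show "(\<lambda>x. fstar f (u x - \<nu>)) \<in> borel_measurable P"
      using um by (simp add: measurable_cong_sets[OF invariant_probsD(2)[OF P] refl])
    fix x assume "x \<in> space P"
    then have "- C \<le> u x - \<nu>"
      using uB invariant_probsD(3)[OF P] unfolding C_def by force
    then have "- ereal C \<le> ereal (u x - \<nu>)"
      by simp
    also have "\<dots> \<le> fstar f (u x - \<nu>)"
      by (rule fstar_ge[where f=f, OF f1])
    finally show "- ereal C \<le> fstar f (u x - \<nu>)" .
  qed
  have "enn2ereal (\<integral>\<^sup>+x. e2ennreal (fstar f (SK K g x - \<nu>) + ereal C) \<partial>P)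
      \<le> enn2ereal (\<integral>\<^sup>+x. e2ennreal (fstar f (g x - \<nu>) + ereal C) \<partial>P)"
    using nn_integral_fstar_SK_le[OF K P g C] by (simp add: less_eq_ennreal.rep_eq[symmetric])
  then show ?thesis
    using shift[OF gm B] shift[OF SK_measurable[OF K gm] abs_SK_le[OF K _ g B]]
    by (metis ereal_minus_mono order_refl)
qed

lemma Df_SK_eq:
  assumes K: "prob_kernel M K" and Q: "Q \<in> invariant_probs M K" and P: "P \<in> invariant_probs M K"
    and f1: "f 1 = 0" and G: "G \<subseteq> Mb M" and sub: "SK K ` G \<subseteq> G"
  shows "Df f G Q P = Df f (SK K ` G) Q P"
  unfolding Df_def
proof (rule SUP_eq_SUP_image_if_le[OF sub])
  fix g assume "g \<in> G"
  then have g: "g \<in> Mb M"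
    using G by auto
  have "(INF \<nu>. ereal \<nu> + eintegral P (\<lambda>x. fstar f (SK K g x - \<nu>)))
      \<le> (INF \<nu>. ereal \<nu> + eintegral P (\<lambda>x. fstar f (g x - \<nu>)))"
    by (intro INF_mono' add_left_mono eintegral_fstar_SK_le[where f=f, OF K P f1 g])
  then show "ereal (\<integral>x. g x \<partial>Q) - (INF \<nu>. ereal \<nu> + eintegral P (\<lambda>x. fstar f (g x - \<nu>)))
      \<le> ereal (\<integral>x. SK K g x \<partial>Q) - (INF \<nu>. ereal \<nu> + eintegral P (\<lambda>x. fstar f (SK K g x - \<nu>)))"
    unfolding integral_SK_invariant[OF K Q g] by (rule ereal_minus_mono[OF order_refl])
qed

lemma integral_exp_SK_le:
  assumes K: "prob_kernel M K" and P: "P \<in> invariant_probs M K"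
    and um: "u \<in> borel_measurable M" and U: "\<And>x. x \<in> space M \<Longrightarrow> u x \<le> U"
    and u: "\<And>x. x \<in> space M \<Longrightarrow> integrable (K x) u"
  shows "(\<integral>x. exp (SK K u x) \<partial>P) \<le> (\<integral>x. exp (u x) \<partial>P)"
proof -
  have eu: "(\<lambda>y. exp (u y)) \<in> Mb M"
    using um U by (intro MbI[where B="exp U"]) auto
  have "(\<integral>x. exp (SK K u x) \<partial>P) \<le> (\<integral>x. SK K (\<lambda>y. exp (u y)) x \<partial>P)"
  proof (rule integral_mono)
    have "(\<lambda>x. exp (SK K u x)) \<in> Mb M"
      using SK_measurable[OF K um] SK_le_const[OF K _ u U]
      by (intro MbI[where B="exp U"]) auto
    then show "integrable P (\<lambda>x. exp (SK K u x))"
      using invariant_probsD(1,2)[OF P] by (rule Mb_integrable)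
    show "integrable P (SK K (\<lambda>y. exp (u y)))"
      using SK_Mb[OF K eu] invariant_probsD(1,2)[OF P] by (rule Mb_integrable)
  next
    fix x assume "x \<in> space P"
    then have x: "x \<in> space M"
      using invariant_probsD(3)[OF P] by simp
    show "exp (SK K u x) \<le> SK K (\<lambda>y. exp (u y)) x"
      unfolding SK_def
      using Mb_integrable[OF eu prob_kernelD(1,2)[OF K x]] u[OF x] exp_convex
      by (intro prob_space.jensens_inequality[OF prob_kernelD(1)[OF K x], where I=UNIV]) auto
  qed
  also have "\<dots> = (\<integral>x. exp (u x) \<partial>P)"
    by (rule integral_SK_invariant[OF K P eu])
  finally show ?thesis .
qed

lemma integrable_exp_cost:
  assumes A: "A \<in> probs M" and B: "B \<in> probs M"
    and cm: "(\<lambda>z. c (fst z) (snd z)) \<in> borel_measurable (M \<Otimes>\<^sub>M M)" and c0: "\<forall>x y. 0 \<le> c x y"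
    and e: "0 < \<epsilon>" and u: "u \<in> Mb M" and v: "v \<in> Mb M"
  shows "integrable (A \<Otimes>\<^sub>M B) (\<lambda>z. exp ((u (fst z) + v (snd z) - c (fst z) (snd z)) / \<epsilon>))"
proof (rule Mb_integrable)
  obtain Bu where [measurable]: "u \<in> borel_measurable M" and Bu: "\<And>x. x \<in> space M \<Longrightarrow> \<bar>u x\<bar> \<le> Bu"
    using MbE[OF u] by blast
  obtain Bv where [measurable]: "v \<in> borel_measurable M" and Bv: "\<And>x. x \<in> space M \<Longrightarrow> \<bar>v x\<bar> \<le> Bv"
    using MbE[OF v] by blast
  have "exp ((u x + v y - c x y) / \<epsilon>) \<le> exp ((Bu + Bv) / \<epsilon>)" if "x \<in> space M" "y \<in> space M" for x y
  proof -
    have "u x + v y - c x y \<le> Bu + Bv"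
      using Bu[OF that(1)] Bv[OF that(2)] c0[rule_format, of x y] by linarith
    then show ?thesis
      using e by (simp add: divide_right_mono)
  qed
  then show "(\<lambda>z. exp ((u (fst z) + v (snd z) - c (fst z) (snd z)) / \<epsilon>)) \<in> Mb (M \<Otimes>\<^sub>M M)"
    using cm by (intro MbI[where B="exp ((Bu + Bv) / \<epsilon>)"]) (auto simp: space_pair_measure)
  show "prob_space (A \<Otimes>\<^sub>M B)"
    using A B by (auto simp: probs_def intro: prob_space_pair)
  show "sets (A \<Otimes>\<^sub>M B) = sets (M \<Otimes>\<^sub>M M)"
    using A B by (auto simp: probs_def intro: sets_pair_measure_cong)
qed

lemma integral_exp_SK_harmonic_le:
  assumes K: "prob_kernel M K" and P: "P \<in> invariant_probs M K" and h: "h \<in> Mb M"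
    and dm: "d \<in> borel_measurable M" and d0: "\<And>x. x \<in> space M \<Longrightarrow> 0 \<le> d x"
    and d: "\<And>x. x \<in> space M \<Longrightarrow> integrable (K x) d \<and> SK K d x = d x" and e: "0 < \<epsilon>"
  shows "(\<integral>x. exp ((SK K h x + a - d x) / \<epsilon>) \<partial>P) \<le> (\<integral>x. exp ((h x + a - d x) / \<epsilon>) \<partial>P)"
proof -
  obtain B where [measurable]: "h \<in> borel_measurable M" and B: "\<And>x. x \<in> space M \<Longrightarrow> \<bar>h x\<bar> \<le> B"
    using MbE[OF h] by blast
  define u where "u = (\<lambda>x. (h x + a - d x) / \<epsilon>)"
  have SKu: "SK K u x = (SK K h x + a - d x) / \<epsilon>" and "integrable (K x) u" if x: "x \<in> space M" for x
  proof -
    interpret prob_space "K x"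
      using prob_kernelD(1)[OF K x] .
    have "integrable (K x) h"
      using Mb_integrable[OF h prob_kernelD(1,2)[OF K x]] .
    then show "SK K u x = (SK K h x + a - d x) / \<epsilon>" and "integrable (K x) u"
      using d[OF x] by (simp_all add: u_def SK_def prob_space)
  qed
  have "u x \<le> (B + \<bar>a\<bar>) / \<epsilon>" if "x \<in> space M" for x
  proof -
    have "h x + a - d x \<le> B + \<bar>a\<bar>"
      using B[OF that] d0[OF that] by linarith
    then show ?thesis
      using e unfolding u_def by (simp add: divide_right_mono)
  qed
  moreover have "u \<in> borel_measurable M"
    unfolding u_def using dm by measurable
  ultimately have "(\<integral>x. exp (SK K u x) \<partial>P) \<le> (\<integral>x. exp (u x) \<partial>P)"
    using \<open>\<And>x. x \<in> space M \<Longrightarrow> integrable (K x) u\<close> by (intro integral_exp_SK_le[OF K P])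
  moreover have "(\<integral>x. exp (SK K u x) \<partial>P) = (\<integral>x. exp ((SK K h x + a - d x) / \<epsilon>) \<partial>P)"
    using invariant_probsD(3)[OF P] SKu by (intro Bochner_Integration.integral_cong) auto
  ultimately show ?thesis
    by (simp add: u_def)
qed

lemma integral_exp_cost_SK_fst_le:
  assumes K: "prob_kernel M K" and A: "A \<in> invariant_probs M K" and B: "B \<in> invariant_probs M K"
    and cm: "(\<lambda>z. c (fst z) (snd z)) \<in> borel_measurable (M \<Otimes>\<^sub>M M)" and c0: "\<forall>x y. 0 \<le> c x y"
    and c1: "\<forall>x\<in>space M. \<forall>y\<in>space M. integrable (K x) (\<lambda>x'. c x' y) \<and> SK K (\<lambda>x'. c x' y) x = c x y"
    and e: "0 < \<epsilon>" and g1: "g1 \<in> Mb M" and g2: "g2 \<in> Mb M"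
  shows "(\<integral>z. exp ((SK K g1 (fst z) + g2 (snd z) - c (fst z) (snd z)) / \<epsilon>) \<partial>(A \<Otimes>\<^sub>M B))
     \<le> (\<integral>z. exp ((g1 (fst z) + g2 (snd z) - c (fst z) (snd z)) / \<epsilon>) \<partial>(A \<Otimes>\<^sub>M B))"
proof -
  have AB: "A \<in> probs M" "B \<in> probs M"
    using A B by (auto simp: invariant_probs_def)
  interpret A: prob_space A using invariant_probsD(1)[OF A] .
  interpret B: prob_space B using invariant_probsD(1)[OF B] .
  interpret pair_sigma_finite A B ..
  define E where "E u x y = exp ((u x + g2 y - c x y) / \<epsilon>)" for u x y
  have int: "integrable (A \<Otimes>\<^sub>M B) (\<lambda>(x, y). E u x y)" if "u \<in> Mb M" for u
    using integrable_exp_cost[OF AB cm c0 e that g2] by (simp add: E_def split_beta')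
  have "(\<integral>x. E (SK K g1) x y \<partial>A) \<le> (\<integral>x. E g1 x y \<partial>A)" if y: "y \<in> space M" for y
    unfolding E_def
  proof (rule integral_exp_SK_harmonic_le[OF K A g1 _ _ _ e])
    show "(\<lambda>x. c x y) \<in> borel_measurable M"
      using measurable_compose[OF measurable_Pair2'[OF y] cm] by simp
  qed (use c0 c1 y in auto)
  then have "(\<integral>y. (\<integral>x. E (SK K g1) x y \<partial>A) \<partial>B) \<le> (\<integral>y. (\<integral>x. E g1 x y \<partial>A) \<partial>B)"
    using invariant_probsD(3)[OF B]
    by (intro integral_mono[OF integrable_snd[OF int[OF SK_Mb[OF K g1]]] integrable_snd[OF int[OF g1]]]) auto
  then show ?thesis
    unfolding integral_snd[OF int[OF SK_Mb[OF K g1]]] integral_snd[OF int[OF g1]]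
    by (simp add: E_def split_beta')
qed

lemma integral_exp_cost_swap:
  fixes c :: "'a \<Rightarrow> 'a \<Rightarrow> real"
  assumes A: "A \<in> probs M" and B: "B \<in> probs M"
    and cm: "(\<lambda>z. c (fst z) (snd z)) \<in> borel_measurable (M \<Otimes>\<^sub>M M)"
    and u: "u \<in> borel_measurable M" and v: "v \<in> borel_measurable M"
  shows "(\<integral>z. exp ((u (fst z) + v (snd z) - c (fst z) (snd z)) / \<epsilon>) \<partial>(A \<Otimes>\<^sub>M B))
     = (\<integral>z. exp ((v (fst z) + u (snd z) - c (snd z) (fst z)) / \<epsilon>) \<partial>(B \<Otimes>\<^sub>M A))"
proof -
  interpret A: prob_space A using A by (simp add: probs_def)
  interpret B: prob_space B using B by (simp add: probs_def)
  interpret pair_sigma_finite A B ..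
  have sets_AB: "sets (A \<Otimes>\<^sub>M B) = sets (M \<Otimes>\<^sub>M M)"
    using A B by (auto simp: probs_def intro: sets_pair_measure_cong)
  have "(\<lambda>z. exp ((u (fst z) + v (snd z) - c (fst z) (snd z)) / \<epsilon>)) \<in> borel_measurable (M \<Otimes>\<^sub>M M)"
    using cm u v by measurable
  then have "(\<lambda>z. exp ((u (fst z) + v (snd z) - c (fst z) (snd z)) / \<epsilon>)) \<in> borel_measurable (A \<Otimes>\<^sub>M B)"
    by (simp only: measurable_cong_sets[OF sets_AB refl])
  from integral_product_swap[OF this] show ?thesis
    by (simp add: split_beta' add.commute)
qed

lemma integral_exp_cost_SK_le:
  assumes K: "prob_kernel M K" and A: "A \<in> invariant_probs M K" and B: "B \<in> invariant_probs M K"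
    and cm: "(\<lambda>z. c (fst z) (snd z)) \<in> borel_measurable (M \<Otimes>\<^sub>M M)" and c0: "\<forall>x y. 0 \<le> c x y"
    and c1: "\<forall>x\<in>space M. \<forall>y\<in>space M. integrable (K x) (\<lambda>x'. c x' y) \<and> SK K (\<lambda>x'. c x' y) x = c x y"
    and c2: "\<forall>x\<in>space M. \<forall>y\<in>space M. integrable (K y) (\<lambda>y'. c x y') \<and> SK K (\<lambda>y'. c x y') y = c x y"
    and e: "0 < \<epsilon>" and g1: "g1 \<in> Mb M" and g2: "g2 \<in> Mb M"
  shows "(\<integral>z. exp ((SK K g1 (fst z) + SK K g2 (snd z) - c (fst z) (snd z)) / \<epsilon>) \<partial>(A \<Otimes>\<^sub>M B))
     \<le> (\<integral>z. exp ((g1 (fst z) + g2 (snd z) - c (fst z) (snd z)) / \<epsilon>) \<partial>(A \<Otimes>\<^sub>M B))"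
proof -
  have AB: "A \<in> probs M" "B \<in> probs M"
    using A B by (auto simp: invariant_probs_def)
  have cm': "(\<lambda>z. c (snd z) (fst z)) \<in> borel_measurable (M \<Otimes>\<^sub>M M)"
    using measurable_compose[OF measurable_pair_swap' cm] by (simp add: split_beta')
  have [measurable]: "g1 \<in> borel_measurable M" "g2 \<in> borel_measurable M"
    using MbE[OF g1] MbE[OF g2] by blast+
  note swap = integral_exp_cost_swap[OF AB cm]
  have "(\<integral>z. exp ((SK K g1 (fst z) + SK K g2 (snd z) - c (fst z) (snd z)) / \<epsilon>) \<partial>(A \<Otimes>\<^sub>M B))
      \<le> (\<integral>z. exp ((g1 (fst z) + SK K g2 (snd z) - c (fst z) (snd z)) / \<epsilon>) \<partial>(A \<Otimes>\<^sub>M B))"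
    by (rule integral_exp_cost_SK_fst_le[OF K A B cm c0 c1 e g1 SK_Mb[OF K g2]])
  also have "\<dots> = (\<integral>z. exp ((SK K g2 (fst z) + g1 (snd z) - c (snd z) (fst z)) / \<epsilon>) \<partial>(B \<Otimes>\<^sub>M A))"
    by (rule swap) (use SK_measurable[OF K] in measurable)
  also have "\<dots> \<le> (\<integral>z. exp ((g2 (fst z) + g1 (snd z) - c (snd z) (fst z)) / \<epsilon>) \<partial>(B \<Otimes>\<^sub>M A))"
    using c2 by (intro integral_exp_cost_SK_fst_le[OF K B A cm']) (use c0 e g1 g2 in auto)
  also have "\<dots> = (\<integral>z. exp ((g1 (fst z) + g2 (snd z) - c (fst z) (snd z)) / \<epsilon>) \<partial>(A \<Otimes>\<^sub>M B))"
    by (rule swap[symmetric]) measurable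
  finally show ?thesis .
qed

lemma Wce_SK2_eq:
  assumes K: "prob_kernel M K" and Q: "Q \<in> invariant_probs M K" and P: "P \<in> invariant_probs M K"
    and cm: "(\<lambda>z. c (fst z) (snd z)) \<in> borel_measurable (M \<Otimes>\<^sub>M M)" and c0: "\<forall>x y. 0 \<le> c x y"
    and c1: "\<forall>x\<in>space M. \<forall>y\<in>space M. integrable (K x) (\<lambda>x'. c x' y) \<and> SK K (\<lambda>x'. c x' y) x = c x y"
    and c2: "\<forall>x\<in>space M. \<forall>y\<in>space M. integrable (K y) (\<lambda>y'. c x y') \<and> SK K (\<lambda>y'. c x y') y = c x y"
    and e: "0 < \<epsilon>" and G: "G \<subseteq> Mb M \<times> Mb M" and sub: "SK2 K ` G \<subseteq> G"
  shows "Wce c \<epsilon> G Q P = Wce c \<epsilon> (SK2 K ` G) Q P"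
proof -
  have "\<epsilon> * (\<integral>z. exp ((SK K (fst g) (fst z) + SK K (snd g) (snd z) - c (fst z) (snd z)) / \<epsilon>) \<partial>(P \<Otimes>\<^sub>M Q))
     \<le> \<epsilon> * (\<integral>z. exp ((fst g (fst z) + snd g (snd z) - c (fst z) (snd z)) / \<epsilon>) \<partial>(P \<Otimes>\<^sub>M Q))"
    if "g \<in> G" for g
    using integral_exp_cost_SK_le[OF K P Q cm c0 c1 c2 e] that G e by auto
  then show ?thesis
    unfolding Wce_def using G
    by (intro SUP_eq_SUP_image_if_le[OF sub])
      (auto simp: SK2_def integral_SK_invariant[OF K P] integral_SK_invariant[OF K Q])
qed

lemma SD_SK2_eq:
  assumes K: "prob_kernel M K" and Q: "Q \<in> invariant_probs M K" and P: "P \<in> invariant_probs M K"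
    and cm: "(\<lambda>z. c (fst z) (snd z)) \<in> borel_measurable (M \<Otimes>\<^sub>M M)" and c0: "\<forall>x y. 0 \<le> c x y"
    and e: "0 < \<epsilon>" and G: "G \<subseteq> Mb M \<times> Mb M" and sub: "SK2 K ` G \<subseteq> G"
    and c1: "\<forall>x\<in>space M. \<forall>y\<in>space M. integrable (K x) (\<lambda>x'. c x' y) \<and> SK K (\<lambda>x'. c x' y) x = c x y"
    and c2: "\<forall>x\<in>space M. \<forall>y\<in>space M. integrable (K y) (\<lambda>y'. c x y') \<and> SK K (\<lambda>y'. c x y') y = c x y"
  shows "SD c \<epsilon> G Q P = SD c \<epsilon> (SK2 K ` G) Q P"
proof -
  note Wce_eq = Wce_SK2_eq[OF K _ _ cm c0 c1 c2 e G sub]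
  show ?thesis
    unfolding SD_def Wce_eq[OF Q P] Wce_eq[OF Q Q] Wce_eq[OF P P] ..
qed

lemma SK2_idem:
  assumes "\<forall>g\<in>Mb M. SK K (SK K g) = SK K g" and "g \<in> Mb M \<times> Mb M"
  shows "SK2 K (SK2 K g) = SK2 K g"
  using assms by (auto simp: SK2_def)

theorem theorem3:
  fixes M :: "'a measure" and K :: "'a \<Rightarrow> 'a measure" and Q P :: "'a measure"
  assumes K: "prob_kernel M K"
    and QP: "Q \<in> invariant_probs M K" "P \<in> invariant_probs M K"
  shows
    "(\<forall>(f::real \<Rightarrow> real) \<Gamma>. admissible_f f \<longrightarrow> \<Gamma> \<subseteq> Mb M \<longrightarrow> SK K ` \<Gamma> \<subseteq> \<Gamma> \<longrightarrow>
        Df f \<Gamma> Q P = Df f (SK K ` \<Gamma>) Q P \<and> WG \<Gamma> Q P = WG (SK K ` \<Gamma>) Q P)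
   \<and> (\<forall>(c::'a \<Rightarrow> 'a \<Rightarrow> real) (\<epsilon>::real) \<Gamma>.
        (\<lambda>z. c (fst z) (snd z)) \<in> borel_measurable (M \<Otimes>\<^sub>M M) \<longrightarrow>
        (\<forall>x y. 0 \<le> c x y) \<longrightarrow> 0 < \<epsilon> \<longrightarrow>
        \<Gamma> \<subseteq> Mb M \<times> Mb M \<longrightarrow> SK2 K ` \<Gamma> \<subseteq> \<Gamma> \<longrightarrow>
        (\<forall>x\<in>space M. \<forall>y\<in>space M.
           integrable (K x) (\<lambda>x'. c x' y) \<and> SK K (\<lambda>x'. c x' y) x = c x y) \<longrightarrow>
        (\<forall>x\<in>space M. \<forall>y\<in>space M.
           integrable (K y) (\<lambda>y'. c x y') \<and> SK K (\<lambda>y'. c x y') y = c x y) \<longrightarrow>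
        SD c \<epsilon> \<Gamma> Q P = SD c \<epsilon> (SK2 K ` \<Gamma>) Q P)
   \<and> (\<forall>\<Gamma>. \<Gamma> \<subseteq> Mb M \<longrightarrow> (\<forall>g\<in>Mb M. SK K (SK K g) = SK K g) \<longrightarrow> SK K ` \<Gamma> \<subseteq> \<Gamma> \<longrightarrow>
        SK K ` \<Gamma> = {\<gamma>\<in>\<Gamma>. SK K \<gamma> = \<gamma>})
   \<and> (\<forall>\<Gamma>. \<Gamma> \<subseteq> Mb M \<times> Mb M \<longrightarrow> (\<forall>g\<in>Mb M. SK K (SK K g) = SK K g) \<longrightarrow> SK2 K ` \<Gamma> \<subseteq> \<Gamma> \<longrightarrow>
        SK2 K ` \<Gamma> = {\<gamma>\<in>\<Gamma>. SK2 K \<gamma> = \<gamma>})"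
  apply (intro conjI allI impI)
  subgoal by (rule Df_SK_eq[OF K QP]) (simp_all add: admissible_f_def)
  subgoal by (rule WG_SK_eq[OF K QP])
  subgoal by (rule SD_SK2_eq[OF K QP])
  subgoal by (rule image_eq_fixpoints_if_idem) auto
  subgoal by (rule image_eq_fixpoints_if_idem) (auto intro: SK2_idem)
  done

end
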